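(* Suppose that $G$ is a group with a finite-index normal subgroup $A\cong\mathbb{Z}^m$, and that there is a homomorphism $\operatorname{sgn}\colon G\to\{1,-1\}$ such that for all $g\in G$ and $x\in A$ we have $g^{-1}xg=x^{\operatorname{sgn}(g)}$. Then $\alpha_G$ is linear.
   Context: For a finitely generated group $G$ with finite generating set $\Sigma$, the automorphic growth function sends $n$ to the number of $\operatorname{Aut}(G)$-orbits of $G$ containing an element of word length at most $n$; $\alpha_G$ is its class under $\sim$, where $f\sim g$ iff $f\preccurlyeq g$ and $g\preccurlyeq f$, and $f\preccurlyeq g$ means there is $\lambda\in\mathbb{N}\setminus\{0\}$ with $f(n)\le\lambda g(\lambda n+\lambda)+\lambda$ for all $n$. Linear means $\alpha_G\sim(n\mapsto n)$. *)

theory Defs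
  imports "HOL-Algebra.Algebra" "HOL-Algebra.Free_Abelian_Groups"
begin

definition word_eval :: "('a, 'b) monoid_scheme \<Rightarrow> 'a list \<Rightarrow> 'a" where
  "word_eval G ws = foldr (\<lambda>x y. x \<otimes>\<^bsub>G\<^esub> y) ws \<one>\<^bsub>G\<^esub>"

definition word_length :: "('a, 'b) monoid_scheme \<Rightarrow> 'a set \<Rightarrow> 'a \<Rightarrow> nat" where
  "word_length G S x = (LEAST k. \<exists>ws. length ws = k \<and>
       set ws \<subseteq> S \<union> (\<lambda>s. inv\<^bsub>G\<^esub> s) ` S \<and> word_eval G ws = x)"

definition aut_orbit :: "('a, 'b) monoid_scheme \<Rightarrow> 'a \<Rightarrow> 'a set" where
  "aut_orbit G x = {\<phi> x | \<phi>. \<phi> \<in> iso G G}"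

definition aut_growth :: "('a, 'b) monoid_scheme \<Rightarrow> 'a set \<Rightarrow> nat \<Rightarrow> nat" where
  "aut_growth G S n = card {aut_orbit G x | x. x \<in> carrier G \<and> word_length G S x \<le> n}"

definition growth_le :: "(nat \<Rightarrow> nat) \<Rightarrow> (nat \<Rightarrow> nat) \<Rightarrow> bool" where
  "growth_le f g \<longleftrightarrow> (\<exists>c::nat. c \<noteq> 0 \<and> (\<forall>n. f n \<le> c * g (c * n + c) + c))"

definition growth_equiv :: "(nat \<Rightarrow> nat) \<Rightarrow> (nat \<Rightarrow> nat) \<Rightarrow> bool" where
  "growth_equiv f g \<longleftrightarrow> growth_le f g \<and> growth_le g f"

definition sign_group :: "int monoid" where
  "sign_group = \<lparr>carrier = {1, -1}, monoid.mult = (*), one = 1\<rparr>"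

end

theory Submission
  imports Defs
begin

text \<open>Let \<open>N = [G : A]\<close> and identify \<open>A\<close> with \<open>\<int>\<^sup>m\<close>. Summing the transfer factors of \<open>x\<close>
  over the cosets of \<open>A\<close> (suitably conjugated) gives a crossed homomorphism
  \<open>T : G \<rightarrow> \<int>\<^sup>m\<close>, \<open>T (x y) = T x + sgn x \<cdot> T y\<close>, which is multiplication by \<open>N\<close> on \<open>A\<close>.
  For every linear \<open>L\<close> with \<open>1 + N L\<close> invertible, \<open>x \<mapsto> L (T x) \<cdot> x\<close> is an automorphism of \<open>G\<close>
  that fixes the cosets of \<open>A\<close> and acts on \<open>T\<close> by \<open>1 + N L\<close>. These matrices act transitively on
  the primitive vectors with a given residue mod \<open>N\<close>, so the orbit of \<open>x\<close> is determined by its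
  coset, the content of \<open>T x\<close> and the residue mod \<open>N\<close> of the primitive part of \<open>T x\<close>. As \<open>T\<close>
  grows at most linearly in the word length, a ball of radius \<open>n\<close> meets \<open>O(n)\<close> orbits.

  Conversely, for a basis vector \<open>a\<close> of \<open>A\<close> the powers \<open>a\<^sup>k\<close> with \<open>k \<equiv> 1 mod 2N\<close> lie in
  distinct orbits: an automorphism taking \<open>a\<^sup>k\<^sup>'\<close> to \<open>a\<^sup>k\<close> yields \<open>y\<close> with \<open>y\<^sup>k\<^sup>' = a\<^sup>k\<close>;
  since \<open>k'\<close> is odd, \<open>sgn y = 1\<close>, and applying \<open>T\<close> shows \<open>k' dvd N k\<close>, hence \<open>k' dvd k\<close>.\<close>

section \<open>Content and primitive part of integer vectors\<close>

definition frag_dot :: "'i set \<Rightarrow> ('i \<Rightarrow> int) \<Rightarrow> ('i \<Rightarrow>\<^sub>0 int) \<Rightarrow> int" where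
  "frag_dot I l v = (\<Sum>i\<in>I. l i * Poly_Mapping.lookup v i)"

definition frag_content :: "'i set \<Rightarrow> ('i \<Rightarrow>\<^sub>0 int) \<Rightarrow> int" where
  "frag_content I v = Gcd (Poly_Mapping.lookup v ` I)"

definition frag_primitive :: "'i set \<Rightarrow> ('i \<Rightarrow>\<^sub>0 int) \<Rightarrow> ('i \<Rightarrow>\<^sub>0 int)" where
  "frag_primitive I v = Poly_Mapping.map (\<lambda>x. x div frag_content I v) v"

definition frag_norm1 :: "'i set \<Rightarrow> ('i \<Rightarrow>\<^sub>0 int) \<Rightarrow> int" where
  "frag_norm1 I v = (\<Sum>i\<in>I. \<bar>Poly_Mapping.lookup v i\<bar>)"

lemma keys_subset_lookup_eq_0:
  "Poly_Mapping.keys v \<subseteq> I \<Longrightarrow> i \<notin> I \<Longrightarrow> Poly_Mapping.lookup v i = 0"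
  by (meson in_keys_iff subsetD)

lemma keys_add_subset [simp]:
  "Poly_Mapping.keys v \<subseteq> I \<Longrightarrow> Poly_Mapping.keys w \<subseteq> I \<Longrightarrow> Poly_Mapping.keys (v + w) \<subseteq> I"
  by (intro order_trans[OF keys_add] Un_least)

lemma keys_diff_subset [simp]:
  "Poly_Mapping.keys v \<subseteq> I \<Longrightarrow> Poly_Mapping.keys w \<subseteq> I \<Longrightarrow> Poly_Mapping.keys (v - w) \<subseteq> I"
  by (intro order_trans[OF keys_diff] Un_least)

lemma keys_cmul_subset [simp]: "Poly_Mapping.keys v \<subseteq> I \<Longrightarrow> Poly_Mapping.keys (frag_cmul c v) \<subseteq> I"
  by (rule order_trans[OF keys_cmul])

lemma frag_eq_on_keysI:
  assumes "Poly_Mapping.keys v \<subseteq> I" "Poly_Mapping.keys w \<subseteq> I"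
    and "\<And>i. i \<in> I \<Longrightarrow> Poly_Mapping.lookup v i = Poly_Mapping.lookup w i"
  shows "v = w"
  by (rule poly_mapping_eqI) (metis assms keys_subset_lookup_eq_0)

lemma frag_cmul_cancel: "c \<noteq> 0 \<Longrightarrow> frag_cmul c v = frag_cmul c w \<Longrightarrow> v = w"
  by (rule poly_mapping_eqI) (metis lookup_frag_cmul mult_cancel_left)

lemma frag_dot_add [simp]: "frag_dot I l (v + w) = frag_dot I l v + frag_dot I l w"
  by (simp add: frag_dot_def lookup_add distrib_left sum.distrib)

lemma frag_dot_diff [simp]: "frag_dot I l (v - w) = frag_dot I l v - frag_dot I l w"
  by (simp add: frag_dot_def lookup_minus right_diff_distrib sum_subtractf)

lemma frag_dot_cmul [simp]: "frag_dot I l (frag_cmul c v) = c * frag_dot I l v"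
  by (simp add: frag_dot_def sum_distrib_left mult_ac)

lemma frag_dot_diff_left:
  "frag_dot I (\<lambda>i. l i - c * l' i) v = frag_dot I l v - c * frag_dot I l' v"
  by (simp add: frag_dot_def algebra_simps sum_subtractf sum_distrib_left)

lemma bezout_Gcd_image:
  fixes a :: "'i \<Rightarrow> int"
  assumes "finite I"
  shows "\<exists>l. (\<Sum>i\<in>I. l i * a i) = Gcd (a ` I)"
  using assms
proof (induction I rule: finite_induct)
  case (insert j I)
  then obtain l where l: "(\<Sum>i\<in>I. l i * a i) = Gcd (a ` I)" by blast
  obtain s t where st: "s * a j + t * Gcd (a ` I) = gcd (a j) (Gcd (a ` I))"
    using bezout_int by blast
  define l' where "l' i = (if i = j then s else t * l i)" for i
  have "(\<Sum>i\<in>I. l' i * a i) = (\<Sum>i\<in>I. t * (l i * a i))"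
    using insert.hyps(2) by (intro sum.cong) (auto simp: l'_def)
  also have "\<dots> = t * Gcd (a ` I)"
    by (simp add: l sum_distrib_left[symmetric])
  finally have "(\<Sum>i\<in>I. l' i * a i) = t * Gcd (a ` I)" .
  then have "(\<Sum>i\<in>insert j I. l' i * a i) = Gcd (a ` insert j I)"
    using insert.hyps st by (simp add: l'_def)
  then show ?case by blast
qed simp

lemma frag_content_bezout: "finite I \<Longrightarrow> \<exists>l. frag_dot I l v = frag_content I v"
  unfolding frag_dot_def frag_content_def by (rule bezout_Gcd_image)

lemma frag_content_dvd: "i \<in> I \<Longrightarrow> frag_content I v dvd Poly_Mapping.lookup v i"
  unfolding frag_content_def by (rule Gcd_dvd) simp

lemma dvd_frag_content: "(\<And>i. i \<in> I \<Longrightarrow> d dvd Poly_Mapping.lookup v i) \<Longrightarrow> d dvd frag_content I v"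
  unfolding frag_content_def by (auto simp: dvd_Gcd_iff)

lemma frag_content_nonneg: "0 \<le> frag_content I v"
  unfolding frag_content_def by simp

lemma frag_content_zero [simp]: "frag_content I 0 = 0"
  by (auto simp: frag_content_def)

lemma frag_content_eq_0_iff: "Poly_Mapping.keys v \<subseteq> I \<Longrightarrow> frag_content I v = 0 \<longleftrightarrow> v = 0"
proof
  assume "Poly_Mapping.keys v \<subseteq> I" "frag_content I v = 0"
  then show "v = 0" unfolding frag_content_def by (intro frag_eq_on_keysI) auto
qed simp

lemma frag_content_cmul: "frag_content I (frag_cmul c v) = \<bar>c\<bar> * frag_content I v"
proof -
  have "Poly_Mapping.lookup (frag_cmul c v) ` I = (\<lambda>x. c * x) ` Poly_Mapping.lookup v ` I"
    by auto
  then show ?thesis unfolding frag_content_def by (simp add: Gcd_mult abs_mult)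
qed

lemma lookup_frag_primitive:
  "Poly_Mapping.lookup (frag_primitive I v) i = Poly_Mapping.lookup v i div frag_content I v"
  by (simp add: frag_primitive_def map.rep_eq when_def)

lemma keys_frag_primitive: "Poly_Mapping.keys v \<subseteq> I \<Longrightarrow> Poly_Mapping.keys (frag_primitive I v) \<subseteq> I"
  by (metis div_0 in_keys_iff lookup_frag_primitive keys_subset_lookup_eq_0 subsetI)

lemma frag_cmul_content_primitive:
  assumes "Poly_Mapping.keys v \<subseteq> I"
  shows "frag_cmul (frag_content I v) (frag_primitive I v) = v"
proof (rule poly_mapping_eqI)
  fix i
  have "frag_content I v dvd Poly_Mapping.lookup v i"
    using assms by (cases "i \<in> I") (auto simp: frag_content_dvd keys_subset_lookup_eq_0)
  then show "Poly_Mapping.lookup (frag_cmul (frag_content I v) (frag_primitive I v)) i = Poly_Mapping.lookup v i"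
    by (simp add: lookup_frag_primitive)
qed

lemma frag_content_primitive:
  assumes "Poly_Mapping.keys v \<subseteq> I" "v \<noteq> 0"
  shows "frag_content I (frag_primitive I v) = 1"
proof -
  have pos: "frag_content I v > 0"
    using assms frag_content_eq_0_iff frag_content_nonneg by (metis order.not_eq_order_implies_strict)
  have "frag_content I v * 1 = frag_content I v * frag_content I (frag_primitive I v)"
    using arg_cong[OF frag_cmul_content_primitive[OF assms(1)], of "frag_content I"] pos
    by (simp add: frag_content_cmul)
  then show ?thesis using pos by simp
qed

lemma frag_norm1_nonneg: "0 \<le> frag_norm1 I v"
  unfolding frag_norm1_def by (simp add: sum_nonneg)

lemma frag_norm1_add_le: "frag_norm1 I (v + w) \<le> frag_norm1 I v + frag_norm1 I w"
  unfolding frag_norm1_def sum.distrib[symmetric]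
  by (rule sum_mono) (simp add: lookup_add abs_triangle_ineq)

lemma frag_norm1_cmul: "frag_norm1 I (frag_cmul c v) = \<bar>c\<bar> * frag_norm1 I v"
  unfolding frag_norm1_def by (simp add: abs_mult sum_distrib_left)

lemma frag_content_le_norm1:
  assumes "finite I"
  shows "frag_content I v \<le> frag_norm1 I v"
proof (cases "\<exists>i\<in>I. Poly_Mapping.lookup v i \<noteq> 0")
  case True
  then obtain i where i: "i \<in> I" "Poly_Mapping.lookup v i \<noteq> 0" by blast
  have "frag_content I v \<le> \<bar>Poly_Mapping.lookup v i\<bar>"
    using dvd_imp_le_int[OF i(2) frag_content_dvd[OF i(1)]] frag_content_nonneg by simp
  moreover have "\<bar>Poly_Mapping.lookup v i\<bar> \<le> frag_norm1 I v"
    unfolding frag_norm1_def using assms i(1) by (intro member_le_sum) simp_all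
  ultimately show ?thesis by linarith
next
  case False
  then have "frag_content I v = 0" unfolding frag_content_def by auto
  then show ?thesis using frag_norm1_nonneg by simp
qed

section \<open>Congruence maps\<close>

definition int_linear :: "'i set \<Rightarrow> (('i \<Rightarrow>\<^sub>0 int) \<Rightarrow> ('i \<Rightarrow>\<^sub>0 int)) \<Rightarrow> bool" where
  "int_linear I L \<longleftrightarrow> (\<forall>v w. L (v + w) = L v + L w) \<and> (\<forall>c v. L (frag_cmul c v) = frag_cmul c (L v))
     \<and> (\<forall>v. Poly_Mapping.keys v \<subseteq> I \<longrightarrow> Poly_Mapping.keys (L v) \<subseteq> I)"

definition congruence_map :: "int \<Rightarrow> (('i \<Rightarrow>\<^sub>0 int) \<Rightarrow> ('i \<Rightarrow>\<^sub>0 int)) \<Rightarrow> ('i \<Rightarrow>\<^sub>0 int) \<Rightarrow> ('i \<Rightarrow>\<^sub>0 int)" where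
  "congruence_map N L v = v + frag_cmul N (L v)"

text \<open>If \<open>l, n\<close> are dual to \<open>w, q\<close>, then \<open>v + frame_map I l n w q c\<^sub>1\<^sub>1 c\<^sub>1\<^sub>2 c\<^sub>2\<^sub>1 c\<^sub>2\<^sub>2 v\<close> acts on
  the span of \<open>w, q\<close> by the matrix \<open>1 + (c\<^sub>i\<^sub>j)\<close> and as the identity on the common kernel of \<open>l, n\<close>.\<close>
definition frame_map ::
    "'i set \<Rightarrow> ('i \<Rightarrow> int) \<Rightarrow> ('i \<Rightarrow> int) \<Rightarrow> ('i \<Rightarrow>\<^sub>0 int) \<Rightarrow> ('i \<Rightarrow>\<^sub>0 int)
      \<Rightarrow> int \<Rightarrow> int \<Rightarrow> int \<Rightarrow> int \<Rightarrow> ('i \<Rightarrow>\<^sub>0 int) \<Rightarrow> ('i \<Rightarrow>\<^sub>0 int)" where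
  "frame_map I l n w q c11 c12 c21 c22 v =
     frag_cmul (c11 * frag_dot I l v + c12 * frag_dot I n v) w
     + frag_cmul (c21 * frag_dot I l v + c22 * frag_dot I n v) q"

lemma int_linearD:
  assumes "int_linear I L"
  shows "L (v + w) = L v + L w" "L (frag_cmul c v) = frag_cmul c (L v)"
    and "Poly_Mapping.keys v \<subseteq> I \<Longrightarrow> Poly_Mapping.keys (L v) \<subseteq> I"
  using assms by (auto simp: int_linear_def)

lemma congruence_map_cmul:
  "int_linear I L \<Longrightarrow> congruence_map N L (frag_cmul c v) = frag_cmul c (congruence_map N L v)"
  by (simp add: congruence_map_def int_linearD frag_cmul_distrib2 mult.commute)

lemma int_linear_frame_map:
  assumes "Poly_Mapping.keys w \<subseteq> I" "Poly_Mapping.keys q \<subseteq> I"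
  shows "int_linear I (frame_map I l n w q c11 c12 c21 c22)"
  unfolding int_linear_def frame_map_def
  using assms by (auto intro!: poly_mapping_eqI simp: lookup_add algebra_simps)

lemma frag_dot_frame_map:
  assumes "frag_dot I l w = 1" "frag_dot I l q = 0" "frag_dot I n w = 0" "frag_dot I n q = 1"
  shows "frag_dot I l (frame_map I l n w q c11 c12 c21 c22 v) = c11 * frag_dot I l v + c12 * frag_dot I n v"
    and "frag_dot I n (frame_map I l n w q c11 c12 c21 c22 v) = c21 * frag_dot I l v + c22 * frag_dot I n v"
  using assms by (simp_all add: frame_map_def)

lemma lookup_frame_map:
  "Poly_Mapping.lookup (frame_map I l n w q c11 c12 c21 c22 v) i
     = (c11 * frag_dot I l v + c12 * frag_dot I n v) * Poly_Mapping.lookup w i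
       + (c21 * frag_dot I l v + c22 * frag_dot I n v) * Poly_Mapping.lookup q i"
  by (simp add: frame_map_def lookup_add)

lemma frame_map_adjugate_inverse:
  fixes v :: "'i \<Rightarrow>\<^sub>0 int"
  assumes lw: "frag_dot I l w = 1" and lq: "frag_dot I l q = 0"
    and nw: "frag_dot I n w = 0" and nq: "frag_dot I n q = 1"
    and det: "(1 + c11) * (1 + c22) - c12 * c21 = 1"
  defines "u \<equiv> v + frame_map I l n w q c11 c12 c21 c22 v"
  shows "u + frame_map I l n w q c22 (- c12) (- c21) c11 u = v"
proof (rule poly_mapping_eqI)
  fix i
  define \<alpha> where "\<alpha> = frag_dot I l v"
  define \<beta> where "\<beta> = frag_dot I n v"
  have lu: "frag_dot I l u = (1 + c11) * \<alpha> + c12 * \<beta>"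
    and nu: "frag_dot I n u = c21 * \<alpha> + (1 + c22) * \<beta>"
    by (simp_all add: u_def frag_dot_frame_map[OF lw lq nw nq] \<alpha>_def \<beta>_def algebra_simps)
  have cw: "c11 * \<alpha> + c12 * \<beta> + (c22 * frag_dot I l u + - c12 * frag_dot I n u) = 0"
  proof -
    have "c11 * \<alpha> + c12 * \<beta> + (c22 * frag_dot I l u + - c12 * frag_dot I n u)
        = \<alpha> * ((1 + c11) * (1 + c22) - c12 * c21 - 1)"
      unfolding lu nu by (simp add: algebra_simps)
    then show ?thesis by (simp add: det)
  qed
  have cq: "c21 * \<alpha> + c22 * \<beta> + (- c21 * frag_dot I l u + c11 * frag_dot I n u) = 0"
  proof -
    have "c21 * \<alpha> + c22 * \<beta> + (- c21 * frag_dot I l u + c11 * frag_dot I n u)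
        = \<beta> * ((1 + c11) * (1 + c22) - c12 * c21 - 1)"
      unfolding lu nu by (simp add: algebra_simps)
    then show ?thesis by (simp add: det)
  qed
  have ui: "Poly_Mapping.lookup u i = Poly_Mapping.lookup v i
      + (c11 * \<alpha> + c12 * \<beta>) * Poly_Mapping.lookup w i + (c21 * \<alpha> + c22 * \<beta>) * Poly_Mapping.lookup q i"
    by (simp add: u_def lookup_add lookup_frame_map \<alpha>_def \<beta>_def)
  have "Poly_Mapping.lookup (u + frame_map I l n w q c22 (- c12) (- c21) c11 u) i
      = Poly_Mapping.lookup u i
        + (c22 * frag_dot I l u + - c12 * frag_dot I n u) * Poly_Mapping.lookup w i
        + (- c21 * frag_dot I l u + c11 * frag_dot I n u) * Poly_Mapping.lookup q i"
    by (simp add: lookup_add lookup_frame_map)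
  also have "\<dots> = Poly_Mapping.lookup v i
        + (c11 * \<alpha> + c12 * \<beta> + (c22 * frag_dot I l u + - c12 * frag_dot I n u)) * Poly_Mapping.lookup w i
        + (c21 * \<alpha> + c22 * \<beta> + (- c21 * frag_dot I l u + c11 * frag_dot I n u)) * Poly_Mapping.lookup q i"
    unfolding ui by (simp add: distrib_right)
  also have "\<dots> = Poly_Mapping.lookup v i"
    by (simp only: cw cq mult_zero_left add_0_right)
  finally show "Poly_Mapping.lookup (u + frame_map I l n w q c22 (- c12) (- c21) c11 u) i = Poly_Mapping.lookup v i" .
qed

lemma bij_betw_frame_map:
  assumes "frag_dot I l w = 1" "frag_dot I l q = 0" "frag_dot I n w = 0" "frag_dot I n q = 1"
    and "(1 + c11) * (1 + c22) - c12 * c21 = 1"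
    and "Poly_Mapping.keys w \<subseteq> I" "Poly_Mapping.keys q \<subseteq> I"
  shows "bij_betw (\<lambda>v. v + frame_map I l n w q c11 c12 c21 c22 v)
           (carrier (free_Abelian_group I)) (carrier (free_Abelian_group I))"
proof (rule bij_betw_byWitness[where f' = "\<lambda>v. v + frame_map I l n w q c22 (- c12) (- c21) c11 v"])
  have "(1 + c22) * (1 + c11) - (- c12) * (- c21) = 1"
    using assms(5) by (simp add: algebra_simps)
  from frame_map_adjugate_inverse[OF assms(1-4) this]
  show "\<forall>v\<in>carrier (free_Abelian_group I).
          v + frame_map I l n w q c22 (- c12) (- c21) c11 v
          + frame_map I l n w q c11 c12 c21 c22 (v + frame_map I l n w q c22 (- c12) (- c21) c11 v) = v"
    unfolding minus_minus by blast
  show "\<forall>v\<in>carrier (free_Abelian_group I).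
          v + frame_map I l n w q c11 c12 c21 c22 v
          + frame_map I l n w q c22 (- c12) (- c21) c11 (v + frame_map I l n w q c11 c12 c21 c22 v) = v"
    using frame_map_adjugate_inverse[OF assms(1-5)] by blast
  have "Poly_Mapping.keys (frame_map I l n w q c c' d d' v) \<subseteq> I" if "Poly_Mapping.keys v \<subseteq> I"
    for c c' d d' v
    using int_linear_frame_map[OF assms(6,7)] that by (rule int_linearD(3))
  then show "(\<lambda>v. v + frame_map I l n w q c11 c12 c21 c22 v) ` carrier (free_Abelian_group I) \<subseteq> carrier (free_Abelian_group I)"
    and "(\<lambda>v. v + frame_map I l n w q c22 (- c12) (- c21) c11 v) ` carrier (free_Abelian_group I) \<subseteq> carrier (free_Abelian_group I)"
    by (simp_all add: image_subset_iff)
qed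

lemma int_linear_cmul: "int_linear I (frag_cmul c)"
  by (simp add: int_linear_def frag_cmul_distrib2 mult.commute)

lemma bij_betw_frag_cmul_unit:
  assumes "\<bar>u\<bar> = 1"
  shows "bij_betw (frag_cmul u) (carrier (free_Abelian_group I)) (carrier (free_Abelian_group I))"
proof -
  have "u = 1 \<or> u = -1" using assms by linarith
  then have "u * u = 1" by auto
  then show ?thesis
    by (intro bij_betw_byWitness[where f' = "frag_cmul u"]) (auto simp: image_subset_iff)
qed

lemma frag_cmul_frame_map:
  "frag_cmul N (frame_map I l n w q c11 c12 c21 c22 v)
     = frame_map I l n w q (N * c11) (N * c12) (N * c21) (N * c22) v"
  by (simp add: frame_map_def frag_cmul_distrib2 algebra_simps)

text \<open>The matrix \<open>1 + N (c\<^sub>i\<^sub>j)\<close> used below has first column \<open>(1 + N c, N d)\<close> and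
  determinant \<open>1\<close>; its second column comes from a Bezout relation.\<close>
lemma congruence_map_frame:
  assumes lw: "frag_dot I l w = 1" and lq: "frag_dot I l q = 0"
    and nw: "frag_dot I n w = 0" and nq: "frag_dot I n q = 1"
    and w: "Poly_Mapping.keys w \<subseteq> I" and q: "Poly_Mapping.keys q \<subseteq> I"
    and cop: "coprime (1 + N * c) (N * d)"
  obtains L where "int_linear I L"
    "bij_betw (congruence_map N L) (carrier (free_Abelian_group I)) (carrier (free_Abelian_group I))"
    "congruence_map N L w = frag_cmul (1 + N * c) w + frag_cmul (N * d) q"
proof -
  obtain s t where st: "s * (1 + N * c) + t * (N * d) = 1"
    using cop by (metis bezout_int coprime_iff_gcd_eq_1)
  define L where "L = frame_map I l n w q c (c * t) d (- c * s)"
  have L_eq: "congruence_map N L = (\<lambda>v. v + frame_map I l n w q (N * c) (N * (c * t)) (N * d) (N * (- c * s)) v)"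
    by (simp add: L_def congruence_map_def frag_cmul_frame_map fun_eq_iff)
  have "(1 + N * c) * (1 + N * (- c * s)) - N * (c * t) * (N * d)
      = 1 + N * c - N * c * (s * (1 + N * c) + t * (N * d))"
    by (simp add: algebra_simps)
  then have det: "(1 + N * c) * (1 + N * (- c * s)) - N * (c * t) * (N * d) = 1"
    by (simp add: st)
  show ?thesis
  proof
    show "int_linear I L" unfolding L_def using w q by (rule int_linear_frame_map)
    show "bij_betw (congruence_map N L) (carrier (free_Abelian_group I)) (carrier (free_Abelian_group I))"
      unfolding L_eq using lw lq nw nq det w q by (rule bij_betw_frame_map)
    show "congruence_map N L w = frag_cmul (1 + N * c) w + frag_cmul (N * d) q"
      by (simp add: L_eq frame_map_def lw nw frag_cmul_distrib)
  qed
qed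

lemma frag_mod_eqE:
  assumes "Poly_Mapping.keys w \<subseteq> I" "Poly_Mapping.keys w' \<subseteq> I"
    and "\<forall>i\<in>I. Poly_Mapping.lookup w i mod N = Poly_Mapping.lookup w' i mod N"
  obtains z where "Poly_Mapping.keys z \<subseteq> I" "w' = w + frag_cmul N z"
proof
  define z where "z = Poly_Mapping.map (\<lambda>x. x div N) (w' - w)"
  have lz: "Poly_Mapping.lookup z i = Poly_Mapping.lookup (w' - w) i div N" for i
    by (simp add: z_def map.rep_eq when_def)
  have dvd: "N dvd Poly_Mapping.lookup (w' - w) i" for i
    using assms by (cases "i \<in> I")
      (auto simp: lookup_minus keys_subset_lookup_eq_0 mod_eq_dvd_iff dvd_diff_commute)
  show "Poly_Mapping.keys z \<subseteq> I"
  proof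
    fix i assume "i \<in> Poly_Mapping.keys z"
    then show "i \<in> I"
      using keys_subset_lookup_eq_0[OF assms(1), of i] keys_subset_lookup_eq_0[OF assms(2), of i]
      by (auto simp: in_keys_iff lz lookup_minus)
  qed
  show "w' = w + frag_cmul N z"
    by (rule poly_mapping_eqI) (use dvd in \<open>simp add: lz lookup_add lookup_minus\<close>)
qed

lemma congruence_map_scalar: "congruence_map N (frag_cmul c) v = frag_cmul (1 + N * c) v"
  by (simp add: congruence_map_def frag_cmul_distrib)

lemma bij_betw_congruence_map_scalar:
  assumes "\<bar>1 + N * c\<bar> = 1"
  shows "bij_betw (congruence_map N (frag_cmul c)) (carrier (free_Abelian_group I)) (carrier (free_Abelian_group I))"
  unfolding congruence_map_scalar[abs_def] by (rule bij_betw_frag_cmul_unit[OF assms])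

lemma coprime_if_frag_content_eq_1:
  assumes "frag_content I (frag_cmul a w + frag_cmul b q) = 1"
  shows "coprime a b"
proof -
  have "gcd a b dvd frag_content I (frag_cmul a w + frag_cmul b q)"
    by (rule dvd_frag_content) (simp add: lookup_add)
  then show ?thesis using assms by (simp add: coprime_iff_gcd_eq_1)
qed

lemma exists_dual_functional:
  assumes "finite I" "frag_content I q = 1" "frag_dot I l w = 1" "frag_dot I l q = 0"
  obtains n where "frag_dot I n w = 0" "frag_dot I n q = 1"
proof -
  obtain n0 where n0: "frag_dot I n0 q = 1" using frag_content_bezout[OF assms(1), of q] assms(2) by auto
  define n where "n i = n0 i - frag_dot I n0 w * l i" for i
  have "frag_dot I n w = 0" "frag_dot I n q = 1"
    unfolding n_def frag_dot_diff_left using assms(3,4) n0 by simp_all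
  then show ?thesis by (rule that)
qed

lemma congruence_map_off_line:
  assumes I: "finite I" and lw: "frag_dot I l w = 1" and w: "Poly_Mapping.keys w \<subseteq> I"
    and z: "Poly_Mapping.keys z \<subseteq> I" "frag_dot I l z = 0" "z \<noteq> 0"
    and primitive: "frag_content I (frag_cmul (1 + N * c) w + frag_cmul N z) = 1"
  obtains L where "int_linear I L"
    "bij_betw (congruence_map N L) (carrier (free_Abelian_group I)) (carrier (free_Abelian_group I))"
    "congruence_map N L w = frag_cmul (1 + N * c) w + frag_cmul N z"
proof -
  define g where "g = frag_content I z"
  define q where "q = frag_primitive I z"
  have q: "Poly_Mapping.keys q \<subseteq> I" "frag_content I q = 1" "frag_cmul g q = z"
    unfolding g_def q_def
    using keys_frag_primitive[OF z(1)] frag_content_primitive[OF z(1,3)]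
      frag_cmul_content_primitive[OF z(1)] by auto
  have "g \<noteq> 0" using z by (simp add: g_def frag_content_eq_0_iff)
  then have lq: "frag_dot I l q = 0"
    using arg_cong[OF q(3), of "frag_dot I l"] z(2) by simp
  obtain n where nw: "frag_dot I n w = 0" and nq: "frag_dot I n q = 1"
    using exists_dual_functional[OF I q(2) lw lq] .
  have z_eq: "frag_cmul N z = frag_cmul (N * g) q" using q(3) by auto
  then have "coprime (1 + N * c) (N * g)"
    using primitive by (intro coprime_if_frag_content_eq_1[of I _ w _ q]) simp
  then obtain L where "int_linear I L"
    "bij_betw (congruence_map N L) (carrier (free_Abelian_group I)) (carrier (free_Abelian_group I))"
    "congruence_map N L w = frag_cmul (1 + N * c) w + frag_cmul (N * g) q"
    by (rule congruence_map_frame[OF lw lq nw nq w q(1)])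
  then show ?thesis using that z_eq by simp
qed

lemma congruence_map_transitive_primitive:
  assumes I: "finite I" and N: "N > 0"
    and w: "Poly_Mapping.keys w \<subseteq> I" "frag_content I w = 1"
    and w': "Poly_Mapping.keys w' \<subseteq> I" "frag_content I w' = 1"
    and cong: "\<forall>i\<in>I. Poly_Mapping.lookup w i mod N = Poly_Mapping.lookup w' i mod N"
  obtains L where "int_linear I L"
    "bij_betw (congruence_map N L) (carrier (free_Abelian_group I)) (carrier (free_Abelian_group I))"
    "congruence_map N L w = w'"
proof -
  obtain z where z: "Poly_Mapping.keys z \<subseteq> I" "w' = w + frag_cmul N z"
    using frag_mod_eqE[OF w(1) w'(1) cong] .
  obtain l where lw: "frag_dot I l w = 1"
    using frag_content_bezout[OF I, of w] w(2) by auto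
  define z1 where "z1 = frag_dot I l z"
  define zp where "zp = z - frag_cmul z1 w"
  have zp: "Poly_Mapping.keys zp \<subseteq> I" "frag_dot I l zp = 0"
    using z(1) w(1) by (simp_all add: zp_def lw z1_def)
  have w'_eq: "w' = frag_cmul (1 + N * z1) w + frag_cmul N zp"
    by (rule poly_mapping_eqI) (simp add: z(2) zp_def lookup_add lookup_minus algebra_simps)
  show ?thesis
  proof (cases "zp = 0")
    case True
    then have w'_scalar: "w' = frag_cmul (1 + N * z1) w" using w'_eq by simp
    then have unit: "\<bar>1 + N * z1\<bar> = 1" using w(2) w'(2) by (simp add: frag_content_cmul)
    have "congruence_map N (frag_cmul z1) w = w'"
      by (simp add: congruence_map_scalar w'_scalar)
    then show ?thesis by (rule that[OF int_linear_cmul bij_betw_congruence_map_scalar[OF unit]])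
  next
    case False
    have "frag_content I (frag_cmul (1 + N * z1) w + frag_cmul N zp) = 1" using w'(2) w'_eq by simp
    with congruence_map_off_line[OF I lw w(1) zp False] obtain L where L: "int_linear I L"
      "bij_betw (congruence_map N L) (carrier (free_Abelian_group I)) (carrier (free_Abelian_group I))"
      "congruence_map N L w = frag_cmul (1 + N * z1) w + frag_cmul N zp" by blast
    show ?thesis using that[OF L(1,2)] L(3) w'_eq by simp
  qed
qed

lemma congruence_map_transitive:
  assumes I: "finite I" and N: "N > 0"
    and v: "Poly_Mapping.keys v \<subseteq> I" and v': "Poly_Mapping.keys v' \<subseteq> I"
    and content: "frag_content I v = frag_content I v'"
    and cong: "\<forall>i\<in>I. Poly_Mapping.lookup (frag_primitive I v) i mod N
                      = Poly_Mapping.lookup (frag_primitive I v') i mod N"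
  obtains L where "int_linear I L"
    "bij_betw (congruence_map N L) (carrier (free_Abelian_group I)) (carrier (free_Abelian_group I))"
    "congruence_map N L v = v'"
proof (cases "v = 0")
  case True
  then have "frag_content I v' = 0" using content by simp
  then have "v' = 0" using frag_content_eq_0_iff[OF v'] by blast
  have unit: "\<bar>1 + N * 0\<bar> = 1" by simp
  have "congruence_map N (frag_cmul 0) v = v'"
    by (simp add: congruence_map_scalar True \<open>v' = 0\<close>)
  then show ?thesis by (rule that[OF int_linear_cmul bij_betw_congruence_map_scalar[OF unit]])
next
  case False
  then have "frag_content I v \<noteq> 0" using frag_content_eq_0_iff[OF v] by blast
  then have "v' \<noteq> 0" using content by auto
  with False obtain L where L: "int_linear I L"
    "bij_betw (congruence_map N L) (carrier (free_Abelian_group I)) (carrier (free_Abelian_group I))"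
    "congruence_map N L (frag_primitive I v) = frag_primitive I v'"
    by (rule congruence_map_transitive_primitive[OF I N keys_frag_primitive[OF v] frag_content_primitive[OF v]
        keys_frag_primitive[OF v'] frag_content_primitive[OF v'] cong])
  have "congruence_map N L v = congruence_map N L (frag_cmul (frag_content I v) (frag_primitive I v))"
    by (simp add: frag_cmul_content_primitive[OF v])
  also have "\<dots> = frag_cmul (frag_content I v) (congruence_map N L (frag_primitive I v))"
    by (rule congruence_map_cmul[OF L(1)])
  also have "\<dots> = v'"
    by (simp add: L(3) content frag_cmul_content_primitive[OF v'])
  finally show ?thesis using that L(1,2) by blast
qed

section \<open>Twisting by a cocycle\<close>

lemma (in group) inv_mult_cancel_left [simp]:
  "x \<in> carrier G \<Longrightarrow> y \<in> carrier G \<Longrightarrow> inv x \<otimes> (x \<otimes> y) = y"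
  by (simp add: m_assoc [symmetric])

lemma (in group) mult_inv_cancel_left [simp]:
  "x \<in> carrier G \<Longrightarrow> y \<in> carrier G \<Longrightarrow> x \<otimes> (inv x \<otimes> y) = y"
  by (simp add: m_assoc [symmetric])

lemma (in group) cocycle_twist_iso:
  assumes H: "subgroup H G"
    and D: "D \<in> carrier G \<rightarrow> H"
    and cocycle: "\<And>x y. x \<in> carrier G \<Longrightarrow> y \<in> carrier G \<Longrightarrow> D (x \<otimes> y) = D x \<otimes> (x \<otimes> D y \<otimes> inv x)"
    and bij: "bij_betw (\<lambda>a. D a \<otimes> a) H H"
  shows "(\<lambda>x. D x \<otimes> x) \<in> iso G G"
proof -
  have Hc: "H \<subseteq> carrier G" using H by (rule subgroup.subset)
  have Dc: "D x \<in> carrier G" if "x \<in> carrier G" for x using D Hc that by auto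
  have "(\<lambda>x. D x \<otimes> x) \<in> hom G G"
    by (rule homI) (simp_all add: Dc cocycle m_assoc)
  then interpret twist: group_hom G G "\<lambda>x. D x \<otimes> x"
    by (simp add: group_hom_def group_hom_axioms_def is_group)
  show ?thesis unfolding twist.iso_iff
  proof (intro conjI ballI impI subsetI)
    fix z assume z: "z \<in> carrier G" "D z \<otimes> z = \<one>"
    then have "inv z = D z" using Dc by (intro inv_equality) auto
    then have "z = inv (D z)" using z(1) by (metis inv_inv)
    moreover have "inv (D z) \<in> H" using subgroup.m_inv_closed[OF H funcset_mem[OF D z(1)]] .
    ultimately have zH: "z \<in> H" by simp
    have eq: "D z \<otimes> z = D \<one> \<otimes> \<one>" using z twist.hom_one by simp
    have inj: "inj_on (\<lambda>a. D a \<otimes> a) H" using bij by (simp add: bij_betw_def)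
    show "z = \<one>" by (rule inj_onD[OF inj eq zH subgroup.one_closed[OF H]])
  next
    fix y assume y: "y \<in> carrier G"
    have "inv (D y) \<in> H" using subgroup.m_inv_closed[OF H funcset_mem[OF D y]] .
    then have "inv (D y) \<in> (\<lambda>a. D a \<otimes> a) ` H" using bij by (simp add: bij_betw_def)
    then obtain a where a: "a \<in> H" "D a \<otimes> a = inv (D y)" by auto
    have ac: "a \<in> carrier G" using a(1) Hc by blast
    have "D (a \<otimes> y) \<otimes> (a \<otimes> y) = (D a \<otimes> a) \<otimes> (D y \<otimes> y)"
      using ac y by (rule twist.hom_mult)
    also have "\<dots> = y" using a(2) y Dc by (simp add: m_assoc [symmetric])
    finally show "y \<in> (\<lambda>x. D x \<otimes> x) ` carrier G"
      using ac y by (intro image_eqI[where x = "a \<otimes> y"]) auto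
  qed
qed

definition coset_rep :: "'a set \<Rightarrow> 'a" where
  "coset_rep C = (SOME t. t \<in> C)"

text \<open>With \<open>t\<^sub>C = coset_rep C\<close>, this is \<open>t\<^sub>C\<^sup>-\<^sup>1 (t\<^sub>C x t\<^sub>C\<^sub>x\<^sup>-\<^sup>1) t\<^sub>C\<close>: the usual transfer factor,
  conjugated so that it satisfies a cocycle identity for the conjugation action of \<open>G\<close> on its normal
  subgroup.\<close>
definition coset_cocycle :: "('a, 'b) monoid_scheme \<Rightarrow> 'a set \<Rightarrow> 'a \<Rightarrow> 'a" where
  "coset_cocycle G C x = x \<otimes>\<^bsub>G\<^esub> inv\<^bsub>G\<^esub> coset_rep (C #>\<^bsub>G\<^esub> x) \<otimes>\<^bsub>G\<^esub> coset_rep C"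

context normal
begin

lemma
  assumes "C \<in> rcosets H"
  shows coset_rep_closed: "coset_rep C \<in> carrier G"
    and r_coset_coset_rep: "H #> coset_rep C = C"
proof -
  obtain g where g: "g \<in> carrier G" "C = H #> g" using assms unfolding RCOSETS_def by blast
  have "g \<in> C" using g rcos_self[OF g(1) subgroup_axioms] by simp
  then have "coset_rep C \<in> H #> g" unfolding coset_rep_def g(2)[symmetric] by (rule someI)
  then show "coset_rep C \<in> carrier G" "H #> coset_rep C = C"
    using g elemrcos_carrier[OF is_group g(1)] repr_independence[OF _ g(1) subgroup_axioms] by auto
qed

lemma rcosets_r_coset:
  assumes "C \<in> rcosets H" "x \<in> carrier G"
  shows "C #> x = H #> (coset_rep C \<otimes> x)" "C #> x \<in> rcosets H"
proof -
  have "C #> x = (H #> coset_rep C) #> x" using r_coset_coset_rep[OF assms(1)] by simp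
  also have "\<dots> = H #> (coset_rep C \<otimes> x)"
    by (rule coset_mult_assoc[OF subset coset_rep_closed[OF assms(1)] assms(2)])
  finally show eq: "C #> x = H #> (coset_rep C \<otimes> x)" .
  show "C #> x \<in> rcosets H"
    unfolding eq using coset_rep_closed[OF assms(1)] assms(2) by (simp add: rcosetsI subset)
qed

lemma bij_betw_r_coset_rcosets:
  assumes "x \<in> carrier G"
  shows "bij_betw (\<lambda>C. C #> x) (rcosets H) (rcosets H)"
proof (rule bij_betw_byWitness[where f' = "\<lambda>C. C #> inv x"])
  have sub: "C \<subseteq> carrier G" if "C \<in> rcosets H" for C
    using that by (rule rcosets_carrier[OF is_group])
  show "\<forall>C\<in>rcosets H. C #> x #> inv x = C" "\<forall>C\<in>rcosets H. C #> inv x #> x = C"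
    using assms sub by (simp_all add: coset_mult_assoc)
  show "(\<lambda>C. C #> x) ` (rcosets H) \<subseteq> rcosets H" "(\<lambda>C. C #> inv x) ` (rcosets H) \<subseteq> rcosets H"
    using assms by (auto intro: rcosets_r_coset(2))
qed

lemma coset_cocycle_closed:
  assumes C: "C \<in> rcosets H" and x: "x \<in> carrier G"
  shows "coset_cocycle G C x \<in> H"
proof -
  define t t' where "t = coset_rep C" and "t' = coset_rep (C #> x)"
  have t: "t \<in> carrier G" and t': "t' \<in> carrier G" "t' \<in> H #> (t \<otimes> x)"
    using coset_rep_closed[OF C] coset_rep_closed[OF rcosets_r_coset(2)[OF C x]]
      r_coset_coset_rep[OF rcosets_r_coset(2)[OF C x]] rcosets_r_coset(1)[OF C x]
      rcos_self[OF _ subgroup_axioms] by (auto simp: t_def t'_def)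
  have "t' \<otimes> inv (t \<otimes> x) \<in> H" by (rule rcos_module_imp[OF is_group _ t'(2)]) (use t x in simp)
  then have "inv t \<otimes> inv (t' \<otimes> inv (t \<otimes> x)) \<otimes> inv (inv t) \<in> H"
    using t by (intro inv_op_closed2) auto
  moreover have "inv t \<otimes> inv (t' \<otimes> inv (t \<otimes> x)) \<otimes> inv (inv t) = coset_cocycle G C x"
    using t t' x by (simp add: coset_cocycle_def t_def [symmetric] t'_def [symmetric] inv_mult_group m_assoc)
  ultimately show ?thesis by simp
qed

lemma coset_cocycle_mult:
  assumes C: "C \<in> rcosets H" and x: "x \<in> carrier G" and y: "y \<in> carrier G"
  shows "coset_cocycle G C (x \<otimes> y) = x \<otimes> coset_cocycle G (C #> x) y \<otimes> inv x \<otimes> coset_cocycle G C x"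
proof -
  have Cx: "C #> x \<in> rcosets H" by (rule rcosets_r_coset(2)[OF C x])
  have "C #> x #> y = C #> (x \<otimes> y)"
    using coset_mult_assoc rcosets_carrier[OF is_group C] x y by simp
  moreover have "coset_rep C \<in> carrier G" "coset_rep (C #> x) \<in> carrier G"
      "coset_rep (C #> x #> y) \<in> carrier G"
    using coset_rep_closed C Cx rcosets_r_coset(2)[OF Cx y] by auto
  ultimately show ?thesis
    using x y by (simp add: coset_cocycle_def m_assoc)
qed

lemma coset_cocycle_subgroup:
  assumes C: "C \<in> rcosets H" and a: "a \<in> H"
  shows "coset_cocycle G C a = a"
proof -
  have t: "coset_rep C \<in> carrier G" and ac: "a \<in> carrier G" using coset_rep_closed[OF C] a subset by auto
  have "coset_rep C \<otimes> a \<otimes> inv (coset_rep C) \<in> H" using t a by (rule inv_op_closed2)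
  then have "coset_rep C \<otimes> a \<in> H #> coset_rep C"
    using t ac by (intro rcos_module_rev[OF is_group]) auto
  then have "H #> coset_rep C = H #> (coset_rep C \<otimes> a)"
    using t by (intro repr_independence subgroup_axioms)
  then have "C #> a = C" using rcosets_r_coset(1)[OF C ac] r_coset_coset_rep[OF C] by simp
  then show ?thesis using t ac by (simp add: coset_cocycle_def m_assoc)
qed

end

section \<open>Automorphism orbits and word length\<close>

lemma aut_orbit_self: "x \<in> aut_orbit G x"
  unfolding aut_orbit_def using iso_set_refl by fastforce

lemma aut_orbit_subset:
  assumes "\<phi> \<in> iso G G"
  shows "aut_orbit G (\<phi> x) \<subseteq> aut_orbit G x"
proof
  fix y assume "y \<in> aut_orbit G (\<phi> x)"
  then obtain \<chi> where "\<chi> \<in> iso G G" "y = \<chi> (\<phi> x)" unfolding aut_orbit_def by blast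
  then have "\<chi> \<circ> \<phi> \<in> iso G G" "y = (\<chi> \<circ> \<phi>) x" using iso_set_trans[OF assms] by auto
  then show "y \<in> aut_orbit G x" unfolding aut_orbit_def by blast
qed

lemma (in group) aut_orbit_iso_eq:
  assumes "\<phi> \<in> iso G G" "x \<in> carrier G"
  shows "aut_orbit G (\<phi> x) = aut_orbit G x"
proof
  show "aut_orbit G (\<phi> x) \<subseteq> aut_orbit G x" using assms(1) by (rule aut_orbit_subset)
  have "inv_into (carrier G) \<phi> (\<phi> x) = x"
    using assms by (simp add: iso_def bij_betw_def inv_into_f_f)
  then show "aut_orbit G x \<subseteq> aut_orbit G (\<phi> x)"
    using aut_orbit_subset[OF iso_set_sym[OF assms(1)], of "\<phi> x"] by simp
qed

lemma word_eval_Nil [simp]: "word_eval G [] = \<one>\<^bsub>G\<^esub>"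
  by (simp add: word_eval_def)

lemma word_eval_Cons [simp]: "word_eval G (s # ws) = s \<otimes>\<^bsub>G\<^esub> word_eval G ws"
  by (simp add: word_eval_def)

context group
begin

lemma word_eval_closed: "set ws \<subseteq> carrier G \<Longrightarrow> word_eval G ws \<in> carrier G"
  by (induction ws) auto

lemma word_eval_append:
  "set ws \<subseteq> carrier G \<Longrightarrow> set ws' \<subseteq> carrier G \<Longrightarrow> word_eval G (ws @ ws') = word_eval G ws \<otimes> word_eval G ws'"
  by (induction ws) (auto simp: word_eval_closed m_assoc)

lemma word_eval_concat_replicate:
  assumes "set ws \<subseteq> carrier G"
  shows "word_eval G (concat (replicate k ws)) = word_eval G ws [^] k"
proof (induction k)
  case (Suc k)
  have "set (concat (replicate k ws)) \<subseteq> carrier G" using assms by auto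
  then have "word_eval G (concat (replicate (Suc k) ws)) = word_eval G ws \<otimes> word_eval G ws [^] k"
    using assms Suc.IH by (simp add: word_eval_append)
  also have "\<dots> = word_eval G ws [^] Suc k"
    using nat_pow_Suc2[OF word_eval_closed[OF assms]] by simp
  finally show ?case .
qed simp

context
  fixes S :: "'a set"
  assumes S: "S \<subseteq> carrier G"
begin

lemma letters_closed: "S \<union> (\<lambda>s. inv s) ` S \<subseteq> carrier G"
  using S by auto

lemma generate_imp_word:
  "x \<in> generate G S \<Longrightarrow> \<exists>ws. set ws \<subseteq> S \<union> (\<lambda>s. inv s) ` S \<and> word_eval G ws = x"
proof (induction rule: generate.induct)
  case one
  show ?case by (intro exI[of _ "[]"]) simp
next
  case (incl h)
  then show ?case using S by (intro exI[of _ "[h]"]) auto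
next
  case (inv h)
  then show ?case using S by (intro exI[of _ "[inv h]"]) auto
next
  case (eng h1 h2)
  then obtain ws1 ws2 where ws: "set ws1 \<subseteq> S \<union> (\<lambda>s. inv s) ` S" "word_eval G ws1 = h1"
    "set ws2 \<subseteq> S \<union> (\<lambda>s. inv s) ` S" "word_eval G ws2 = h2" by blast
  moreover have "set ws1 \<subseteq> carrier G" "set ws2 \<subseteq> carrier G"
    using ws(1,3) letters_closed by blast+
  ultimately show ?case by (intro exI[of _ "ws1 @ ws2"]) (auto simp: word_eval_append)
qed

lemma word_length_le:
  "set ws \<subseteq> S \<union> (\<lambda>s. inv s) ` S \<Longrightarrow> word_length G S (word_eval G ws) \<le> length ws"
  unfolding word_length_def by (rule Least_le) blast

lemma word_length_witness:
  assumes "generate G S = carrier G" "x \<in> carrier G"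
  obtains ws where "length ws = word_length G S x" "set ws \<subseteq> S \<union> (\<lambda>s. inv s) ` S" "word_eval G ws = x"
proof -
  obtain ws where "set ws \<subseteq> S \<union> (\<lambda>s. inv s) ` S" "word_eval G ws = x"
    using generate_imp_word assms by blast
  then have "\<exists>k ws. length ws = k \<and> set ws \<subseteq> S \<union> (\<lambda>s. inv s) ` S \<and> word_eval G ws = x" by blast
  then have "\<exists>ws. length ws = word_length G S x \<and> set ws \<subseteq> S \<union> (\<lambda>s. inv s) ` S \<and> word_eval G ws = x"
    unfolding word_length_def by (rule LeastI_ex)
  with that show ?thesis by blast
qed

lemma word_length_pow_le:
  assumes "generate G S = carrier G" "x \<in> carrier G"
  shows "word_length G S (x [^] k) \<le> k * word_length G S x"
proof -
  obtain ws where ws: "length ws = word_length G S x" "set ws \<subseteq> S \<union> (\<lambda>s. inv s) ` S" "word_eval G ws = x"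
    using word_length_witness[OF assms] .
  have "set (concat (replicate k ws)) \<subseteq> S \<union> (\<lambda>s. inv s) ` S" using ws(2) by auto
  moreover have "word_eval G (concat (replicate k ws)) = x [^] k"
    using word_eval_concat_replicate ws(2,3) letters_closed by blast
  ultimately have "word_length G S (x [^] k) \<le> length (concat (replicate k ws))"
    using word_length_le[of "concat (replicate k ws)"] by simp
  also have "\<dots> = k * word_length G S x" using ws(1) by (simp add: length_concat sum_list_replicate)
  finally show ?thesis .
qed

lemma finite_word_length_le:
  assumes "finite S" "generate G S = carrier G"
  shows "finite {x \<in> carrier G. word_length G S x \<le> n}"
proof (rule finite_subset)
  show "{x \<in> carrier G. word_length G S x \<le> n} \<subseteq> word_eval G ` {ws. set ws \<subseteq> S \<union> (\<lambda>s. inv s) ` S \<and> length ws \<le> n}"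
  proof
    fix x assume x: "x \<in> {x \<in> carrier G. word_length G S x \<le> n}"
    then obtain ws where "length ws = word_length G S x" "set ws \<subseteq> S \<union> (\<lambda>s. inv s) ` S" "word_eval G ws = x"
      using word_length_witness[OF assms(2)] by blast
    then show "x \<in> word_eval G ` {ws. set ws \<subseteq> S \<union> (\<lambda>s. inv s) ` S \<and> length ws \<le> n}" using x by auto
  qed
  show "finite (word_eval G ` {ws. set ws \<subseteq> S \<union> (\<lambda>s. inv s) ` S \<and> length ws \<le> n})"
    using assms(1) by (intro finite_imageI finite_lists_length_le) auto
qed

lemma subadditive_le_word_length:
  fixes h :: "'a \<Rightarrow> int"
  assumes gen: "generate G S = carrier G" and x: "x \<in> carrier G"
    and one: "h \<one> \<le> 0"
    and mult: "\<And>x y. x \<in> carrier G \<Longrightarrow> y \<in> carrier G \<Longrightarrow> h (x \<otimes> y) \<le> h x + h y"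
    and letters: "\<And>s. s \<in> S \<union> (\<lambda>s. inv s) ` S \<Longrightarrow> h s \<le> B"
  shows "h x \<le> B * int (word_length G S x)"
proof -
  have bound: "h (word_eval G ws) \<le> B * int (length ws)" if "set ws \<subseteq> S \<union> (\<lambda>s. inv s) ` S" for ws
    using that
  proof (induction ws)
    case (Cons s ws)
    then have s: "s \<in> carrier G" "s \<in> S \<union> (\<lambda>s. inv s) ` S" and ws: "set ws \<subseteq> carrier G"
      using letters_closed by auto
    have "h (word_eval G (s # ws)) \<le> h s + h (word_eval G ws)"
      using mult[OF s(1) word_eval_closed[OF ws]] by simp
    also have "\<dots> \<le> B + B * int (length ws)"
      using Cons letters[OF s(2)] by simp
    finally show ?case by (simp add: algebra_simps)
  qed (simp add: one)
  obtain ws where ws: "length ws = word_length G S x" "set ws \<subseteq> S \<union> (\<lambda>s. inv s) ` S" "word_eval G ws = x"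
    using word_length_witness[OF gen x] .
  then show ?thesis using bound[OF ws(2)] by simp
qed

end

end

lemma (in group) card_le_aut_growth:
  assumes "finite S" "S \<subseteq> carrier G" "generate G S = carrier G"
    and inj: "inj_on (\<lambda>j. aut_orbit G (x j)) J"
    and x: "\<And>j. j \<in> J \<Longrightarrow> x j \<in> carrier G \<and> word_length G S (x j) \<le> n"
  shows "card J \<le> aut_growth G S n"
proof -
  have "(\<lambda>j. aut_orbit G (x j)) ` J \<subseteq> aut_orbit G ` {x \<in> carrier G. word_length G S x \<le> n}"
    using x by blast
  moreover have "finite (aut_orbit G ` {x \<in> carrier G. word_length G S x \<le> n})"
    using finite_word_length_le[OF assms(2,1,3)] by blast
  ultimately have "card ((\<lambda>j. aut_orbit G (x j)) ` J) \<le> card (aut_orbit G ` {x \<in> carrier G. word_length G S x \<le> n})"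
    by (rule card_mono[rotated])
  moreover have "{aut_orbit G x | x. x \<in> carrier G \<and> word_length G S x \<le> n}
      = aut_orbit G ` {x \<in> carrier G. word_length G S x \<le> n}" by blast
  ultimately show ?thesis unfolding aut_growth_def using card_image[OF inj] by simp
qed

lemma growth_le_linearI:
  assumes "\<And>n. f n \<le> a * n + b"
  shows "growth_le f (\<lambda>n. n)"
  unfolding growth_le_def
proof (intro exI conjI allI)
  fix n
  define c where "c = a + b + 1"
  have "a * n \<le> c * (c * n + c)"
  proof -
    have "a * n \<le> c * n" by (rule mult_le_mono1) (simp add: c_def)
    also have "\<dots> \<le> c * (c * n + c)" by (simp add: c_def)
    finally show ?thesis .
  qed
  then show "f n \<le> (a + b + 1) * ((a + b + 1) * n + (a + b + 1)) + (a + b + 1)"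
    using assms[of n] by (simp add: c_def)
qed simp

lemma growth_le_id_linearI:
  assumes "c \<noteq> 0" "\<And>n. n \<le> g (c * n + c)"
  shows "growth_le (\<lambda>n. n) g"
  unfolding growth_le_def
proof (intro exI conjI allI)
  show "n \<le> c * g (c * n + c) + c" for n
  proof -
    have "g (c * n + c) \<le> c * g (c * n + c)" using assms(1) by simp
    then show ?thesis using assms(2)[of n] by linarith
  qed
qed (rule assms(1))

lemma aut_growth_le_card:
  fixes G :: "('a, 'b) monoid_scheme"
  assumes "finite K"
    and key: "\<And>x. x \<in> carrier G \<Longrightarrow> word_length G S x \<le> n \<Longrightarrow> key x \<in> K"
    and orbit: "\<And>x y. x \<in> carrier G \<Longrightarrow> y \<in> carrier G \<Longrightarrow> key x = key y \<Longrightarrow> aut_orbit G x = aut_orbit G y"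
  shows "aut_growth G S n \<le> card K"
proof -
  define Xn where "Xn = {x \<in> carrier G. word_length G S x \<le> n}"
  define pick where "pick k = (SOME x. x \<in> Xn \<and> key x = k)" for k
  have "aut_orbit G ` Xn \<subseteq> (\<lambda>k. aut_orbit G (pick k)) ` K"
  proof
    fix Q assume "Q \<in> aut_orbit G ` Xn"
    then obtain x where x: "x \<in> carrier G" "word_length G S x \<le> n" "Q = aut_orbit G x"
      by (auto simp: Xn_def)
    have "pick (key x) \<in> Xn \<and> key (pick (key x)) = key x"
      unfolding pick_def by (rule someI[of _ x]) (simp add: Xn_def x)
    then have "Q = aut_orbit G (pick (key x))"
      using orbit[of "pick (key x)" x] x by (simp add: Xn_def)
    then show "Q \<in> (\<lambda>k. aut_orbit G (pick k)) ` K"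
      using key[OF x(1,2)] by blast
  qed
  then have "card (aut_orbit G ` Xn) \<le> card ((\<lambda>k. aut_orbit G (pick k)) ` K)"
    using assms(1) by (intro card_mono) auto
  moreover have "card ((\<lambda>k. aut_orbit G (pick k)) ` K) \<le> card K"
    using assms(1) by (rule card_image_le)
  moreover have "{aut_orbit G x | x. x \<in> carrier G \<and> word_length G S x \<le> n} = aut_orbit G ` Xn"
    by (auto simp: Xn_def)
  ultimately show ?thesis unfolding aut_growth_def by simp
qed

section \<open>Lattices twisted by a sign character\<close>

locale signed_lattice_extension = normal A G for A and G (structure) +
  fixes I :: "'i set" and sgn :: "'a \<Rightarrow> int" and f :: "'a \<Rightarrow> 'i \<Rightarrow>\<^sub>0 int"
  assumes finite_index: "finite (rcosets A)"
    and finite_I: "finite I" and I_nonempty: "I \<noteq> {}"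
    and f_iso: "f \<in> iso (G\<lparr>carrier := A\<rparr>) (free_Abelian_group I)"
    and sgn_hom: "sgn \<in> hom G sign_group"
    and conj_eq_pow_sgn: "\<forall>g\<in>carrier G. \<forall>x\<in>A. inv g \<otimes> x \<otimes> g = x [^] sgn g"
begin

definition f_inv :: "('i \<Rightarrow>\<^sub>0 int) \<Rightarrow> 'a" where
  "f_inv = inv_into A f"

lemma f_bij: "bij_betw f A (carrier (free_Abelian_group I))"
  using f_iso by (simp add: iso_def)

lemma keys_f: "a \<in> A \<Longrightarrow> Poly_Mapping.keys (f a) \<subseteq> I"
  using bij_betwE[OF f_bij] by simp

lemma f_mult: "a \<in> A \<Longrightarrow> b \<in> A \<Longrightarrow> f (a \<otimes> b) = f a + f b"
  using f_iso by (simp add: iso_def hom_def)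

lemma f_inv_closed: "Poly_Mapping.keys v \<subseteq> I \<Longrightarrow> f_inv v \<in> A"
  unfolding f_inv_def using f_bij by (simp add: bij_betw_def inv_into_into)

lemma f_f_inv: "Poly_Mapping.keys v \<subseteq> I \<Longrightarrow> f (f_inv v) = v"
  unfolding f_inv_def using f_bij by (simp add: bij_betw_def f_inv_into_f)

lemma f_inv_f: "a \<in> A \<Longrightarrow> f_inv (f a) = a"
  unfolding f_inv_def using f_bij by (simp add: bij_betw_def inv_into_f_f)

lemma f_eqD:
  assumes "a \<in> A" "b \<in> A" "f a = f b"
  shows "a = b"
proof -
  have "a = f_inv (f a)" using f_inv_f[OF assms(1)] by simp
  also have "\<dots> = b" using f_inv_f[OF assms(2)] assms(3) by simp
  finally show ?thesis .
qed

lemma f_inv_add: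
  "Poly_Mapping.keys v \<subseteq> I \<Longrightarrow> Poly_Mapping.keys w \<subseteq> I \<Longrightarrow> f_inv (v + w) = f_inv v \<otimes> f_inv w"
  by (rule f_eqD) (simp_all add: f_inv_closed f_mult f_f_inv)

lemma f_group_hom: "group_hom (G\<lparr>carrier := A\<rparr>) (free_Abelian_group I) f"
  using f_iso subgroup_imp_group[OF subgroup_axioms]
  by (simp add: group_hom_def group_hom_axioms_def iso_def)

lemma f_one: "f \<one> = 0"
  using group_hom.hom_one[OF f_group_hom] by simp

lemma f_inverse: "a \<in> A \<Longrightarrow> f (inv a) = - f a"
  using group_hom.hom_inv[OF f_group_hom, of a] subgroup_axioms keys_f by simp

lemma nat_pow_closed_subgroup: "a \<in> A \<Longrightarrow> a [^] (k::nat) \<in> A"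
  by (induction k) auto

lemma f_pow: "a \<in> A \<Longrightarrow> f (a [^] (k::nat)) = frag_cmul (int k) (f a)"
  using group_hom.hom_nat_pow[OF f_group_hom, of a k] nat_pow_consistent[of a k A] by simp

lemma A_comm: "a \<in> A \<Longrightarrow> b \<in> A \<Longrightarrow> a \<otimes> b = b \<otimes> a"
  by (rule f_eqD) (simp_all add: f_mult add.commute)

lemma sgn_cases: "x \<in> carrier G \<Longrightarrow> sgn x = 1 \<or> sgn x = -1"
  using sgn_hom by (auto simp: hom_def sign_group_def)

lemma sgn_mult: "x \<in> carrier G \<Longrightarrow> y \<in> carrier G \<Longrightarrow> sgn (x \<otimes> y) = sgn x * sgn y"
  using sgn_hom by (simp add: hom_def sign_group_def)

lemma sgn_one: "sgn \<one> = 1"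
proof (rule ccontr)
  assume "sgn \<one> \<noteq> 1"
  then have "sgn \<one> = -1" using sgn_cases[of \<one>] by simp
  then show False using sgn_mult[of \<one> \<one>] by simp
qed

lemma sgn_inv:
  assumes x: "x \<in> carrier G"
  shows "sgn (inv x) = sgn x"
proof -
  have "sgn (x \<otimes> inv x) = sgn x * sgn (inv x)" using x by (intro sgn_mult) auto
  then have "sgn x * sgn (inv x) = 1" using x sgn_one by simp
  then show ?thesis using sgn_cases[OF x] sgn_cases[of "inv x"] x by auto
qed

lemma sgn_pow: "x \<in> carrier G \<Longrightarrow> sgn (x [^] (k::nat)) = sgn x ^ k"
  by (induction k) (simp_all add: sgn_one sgn_mult)

lemma f_conj:
  assumes x: "x \<in> carrier G" and b: "b \<in> A"
  shows "f (x \<otimes> b \<otimes> inv x) = frag_cmul (sgn x) (f b)"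
proof -
  have "inv (inv x) \<otimes> b \<otimes> inv x = b [^] sgn (inv x)"
    using conj_eq_pow_sgn inv_closed[OF x] b by blast
  then have "x \<otimes> b \<otimes> inv x = b [^] sgn x"
    using x by (simp add: sgn_inv)
  then show ?thesis
    using sgn_cases[OF x] b by (auto simp: int_pow_neg f_inverse)
qed

lemma sgn_subgroup:
  assumes a: "a \<in> A"
  shows "sgn a = 1"
proof (rule ccontr)
  assume "sgn a \<noteq> 1"
  moreover have ac: "a \<in> carrier G" using a subset by blast
  ultimately have minus: "sgn a = -1" using sgn_cases by blast
  obtain i where i: "i \<in> I" using I_nonempty by blast
  define b where "b = f_inv (frag_of i)"
  have b: "b \<in> A" "f b = frag_of i" using i by (simp_all add: b_def f_inv_closed f_f_inv)
  have bc: "b \<in> carrier G" using b(1) subset by blast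
  have "a \<otimes> b \<otimes> inv a = b \<otimes> a \<otimes> inv a" by (simp only: A_comm[OF a b(1)])
  also have "\<dots> = b" using ac bc by (simp add: m_assoc)
  finally have "a \<otimes> b \<otimes> inv a = b" .
  then have "frag_of i = - frag_of i" using f_conj[OF ac b(1)] b(2) minus by simp
  from arg_cong[OF this, of "\<lambda>v. Poly_Mapping.lookup v i"] show False by simp
qed

definition transfer :: "'a \<Rightarrow> 'i \<Rightarrow>\<^sub>0 int" where
  "transfer x = (\<Sum>C\<in>rcosets A. f (coset_cocycle G C x))"

definition index :: int where
  "index = int (card (rcosets A))"

lemma index_pos: "0 < index"
proof -
  have "A #> \<one> \<in> rcosets A" using subset by (intro rcosetsI) auto
  then show ?thesis using finite_index by (auto simp: index_def card_gt_0_iff)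
qed

lemma keys_transfer: "x \<in> carrier G \<Longrightarrow> Poly_Mapping.keys (transfer x) \<subseteq> I"
  using sum_closed_free_Abelian_group[of "rcosets A" "\<lambda>C. f (coset_cocycle G C x)" I]
  by (simp add: transfer_def keys_f coset_cocycle_closed)

lemma transfer_mult:
  assumes x: "x \<in> carrier G" and y: "y \<in> carrier G"
  shows "transfer (x \<otimes> y) = transfer x + frag_cmul (sgn x) (transfer y)"
proof -
  have "transfer (x \<otimes> y)
      = (\<Sum>C\<in>rcosets A. f (coset_cocycle G C x) + frag_cmul (sgn x) (f (coset_cocycle G (C #> x) y)))"
    unfolding transfer_def
  proof (rule sum.cong [OF refl])
    fix C assume C: "C \<in> rcosets A"
    have u: "coset_cocycle G (C #> x) y \<in> A"
      using coset_cocycle_closed[OF rcosets_r_coset(2)[OF C x] y] .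
    have "f (coset_cocycle G C (x \<otimes> y))
        = f (x \<otimes> coset_cocycle G (C #> x) y \<otimes> inv x) + f (coset_cocycle G C x)"
      using coset_cocycle_mult[OF C x y] f_mult inv_op_closed2[OF x u] coset_cocycle_closed[OF C x] by simp
    then show "f (coset_cocycle G C (x \<otimes> y))
        = f (coset_cocycle G C x) + frag_cmul (sgn x) (f (coset_cocycle G (C #> x) y))"
      by (simp add: f_conj[OF x u] add.commute)
  qed
  also have "\<dots> = transfer x + frag_cmul (sgn x) (\<Sum>C\<in>rcosets A. f (coset_cocycle G (C #> x) y))"
    by (simp add: transfer_def sum.distrib frag_cmul_sum)
  also have "(\<Sum>C\<in>rcosets A. f (coset_cocycle G (C #> x) y)) = transfer y"
    unfolding transfer_def by (rule sum.reindex_bij_betw[OF bij_betw_r_coset_rcosets[OF x]])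
  finally show ?thesis .
qed

lemma transfer_subgroup:
  assumes a: "a \<in> A"
  shows "transfer a = frag_cmul index (f a)"
proof -
  have "transfer a = (\<Sum>C\<in>rcosets A. f a)"
    unfolding transfer_def by (rule sum.cong) (simp_all add: coset_cocycle_subgroup a)
  also have "\<dots> = frag_cmul index (f a)"
    by (rule poly_mapping_eqI) (simp add: lookup_sum index_def)
  finally show ?thesis .
qed

lemma transfer_one: "transfer \<one> = 0"
  using transfer_subgroup[of \<one>] by (simp add: f_one)

lemma transfer_nat_pow:
  assumes y: "y \<in> carrier G" and "sgn y = 1"
  shows "transfer (y [^] (k::nat)) = frag_cmul (int k) (transfer y)"
proof (induction k)
  case (Suc k)
  have "transfer (y [^] Suc k) = transfer (y [^] k) + frag_cmul (sgn (y [^] k)) (transfer y)"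
    using y by (simp add: transfer_mult)
  then show ?case using Suc.IH assms by (simp add: sgn_pow frag_cmul_distrib)
qed (simp add: transfer_one)

definition twist :: "(('i \<Rightarrow>\<^sub>0 int) \<Rightarrow> ('i \<Rightarrow>\<^sub>0 int)) \<Rightarrow> 'a \<Rightarrow> 'a" where
  "twist L x = f_inv (L (transfer x)) \<otimes> x"

lemma conj_f_inv:
  assumes "x \<in> carrier G" "Poly_Mapping.keys v \<subseteq> I"
  shows "x \<otimes> f_inv v \<otimes> inv x = f_inv (frag_cmul (sgn x) v)"
  using assms by (intro f_eqD) (simp_all add: f_conj f_inv_closed f_f_inv inv_op_closed2)

lemma twist_iso:
  assumes L: "int_linear I L"
    and bij: "bij_betw (congruence_map index L) (carrier (free_Abelian_group I)) (carrier (free_Abelian_group I))"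
  shows "twist L \<in> iso G G"
proof -
  have LT: "Poly_Mapping.keys (L (transfer x)) \<subseteq> I" if "x \<in> carrier G" for x
    using int_linearD(3)[OF L keys_transfer[OF that]] .
  have "(\<lambda>x. f_inv (L (transfer x)) \<otimes> x) \<in> iso G G"
  proof (rule cocycle_twist_iso[OF subgroup_axioms])
    show "(\<lambda>x. f_inv (L (transfer x))) \<in> carrier G \<rightarrow> A"
      using LT by (simp add: f_inv_closed)
    show "f_inv (L (transfer (x \<otimes> y))) = f_inv (L (transfer x)) \<otimes> (x \<otimes> f_inv (L (transfer y)) \<otimes> inv x)"
      if "x \<in> carrier G" "y \<in> carrier G" for x y
      using that LT by (simp add: transfer_mult int_linearD[OF L] conj_f_inv f_inv_add)
    have eqs: "f_inv (L (transfer a)) \<otimes> a = (f_inv \<circ> (congruence_map index L \<circ> f)) a" if "a \<in> A" for a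
    proof -
      have keys_fa: "Poly_Mapping.keys (f a) \<subseteq> I" using keys_f[OF that] .
      then have "f_inv (L (transfer a)) \<otimes> a = f_inv (frag_cmul index (L (f a))) \<otimes> f_inv (f a)"
        using that by (simp add: transfer_subgroup int_linearD[OF L] f_inv_f)
      also have "\<dots> = (f_inv \<circ> (congruence_map index L \<circ> f)) a"
        using keys_fa int_linearD(3)[OF L keys_fa]
        by (simp add: congruence_map_def f_inv_add [symmetric] add.commute)
      finally show ?thesis .
    qed
    have "bij_betw (f_inv \<circ> (congruence_map index L \<circ> f)) A A"
      unfolding f_inv_def by (rule bij_betw_trans[OF bij_betw_trans[OF f_bij bij] bij_betw_inv_into[OF f_bij]])
    then show "bij_betw (\<lambda>a. f_inv (L (transfer a)) \<otimes> a) A A"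
      by (subst bij_betw_cong[where g = "f_inv \<circ> (congruence_map index L \<circ> f)"]) (simp_all only: eqs)
  qed
  then show ?thesis by (simp add: twist_def [abs_def])
qed

lemma twist_eq:
  assumes L: "int_linear I L" and x: "x \<in> carrier G" and y: "y \<in> carrier G"
    and coset: "A #> x = A #> y" and cong: "congruence_map index L (transfer x) = transfer y"
  shows "twist L x = y"
proof -
  have "y \<in> A #> x" using coset rcos_self[OF y subgroup_axioms] by simp
  then have a: "y \<otimes> inv x \<in> A" by (rule rcos_module_imp[OF is_group x])
  have y_eq: "(y \<otimes> inv x) \<otimes> x = y" using x y by (simp add: m_assoc)
  have ty: "transfer y = frag_cmul index (f (y \<otimes> inv x)) + transfer x"
    using transfer_mult[of "y \<otimes> inv x" x] x y sgn_subgroup[OF a] transfer_subgroup[OF a]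
    by (simp add: y_eq)
  from cong have "transfer x + frag_cmul index (L (transfer x)) = frag_cmul index (f (y \<otimes> inv x)) + transfer x"
    unfolding congruence_map_def ty .
  then have "frag_cmul index (L (transfer x)) = frag_cmul index (f (y \<otimes> inv x))"
    by (simp only: add.commute[of "transfer x"] add_right_cancel)
  moreover have "index \<noteq> 0" using index_pos by simp
  ultimately have "L (transfer x) = f (y \<otimes> inv x)" using frag_cmul_cancel by blast
  then show ?thesis by (simp add: twist_def f_inv_f[OF a] y_eq)
qed

definition primitive_residue :: "'a \<Rightarrow> 'i \<Rightarrow> int" where
  "primitive_residue x = restrict (\<lambda>i. Poly_Mapping.lookup (frag_primitive I (transfer x)) i mod index) I"

lemma aut_orbit_eq_if_transfer_congruent:
  assumes x: "x \<in> carrier G" and y: "y \<in> carrier G" and coset: "A #> x = A #> y"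
    and content: "frag_content I (transfer x) = frag_content I (transfer y)"
    and residue: "primitive_residue x = primitive_residue y"
  shows "aut_orbit G x = aut_orbit G y"
proof -
  have cong: "\<forall>i\<in>I. Poly_Mapping.lookup (frag_primitive I (transfer x)) i mod index
                   = Poly_Mapping.lookup (frag_primitive I (transfer y)) i mod index"
  proof
    fix i assume "i \<in> I"
    with fun_cong[OF residue, of i]
    show "Poly_Mapping.lookup (frag_primitive I (transfer x)) i mod index
        = Poly_Mapping.lookup (frag_primitive I (transfer y)) i mod index"
      by (simp add: primitive_residue_def)
  qed
  obtain L where L: "int_linear I L"
    "bij_betw (congruence_map index L) (carrier (free_Abelian_group I)) (carrier (free_Abelian_group I))"
    "congruence_map index L (transfer x) = transfer y"
    by (rule congruence_map_transitive[OF finite_I index_pos keys_transfer[OF x] keys_transfer[OF y]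
          content cong])
  have "y = twist L x" using twist_eq[OF L(1) x y coset L(3)] by simp
  then show ?thesis using aut_orbit_iso_eq[OF twist_iso[OF L(1,2)] x] by simp
qed

context
  fixes S :: "'a set"
  assumes S: "finite S" "S \<subseteq> carrier G" "generate G S = carrier G"
begin

lemma transfer_norm1_le_word_length:
  obtains B :: nat where
    "\<And>x. x \<in> carrier G \<Longrightarrow> frag_norm1 I (transfer x) \<le> int B * int (word_length G S x)"
proof -
  define B where "B = nat (\<Sum>s\<in>S \<union> (\<lambda>s. inv s) ` S. frag_norm1 I (transfer s))"
  have "frag_norm1 I (transfer x) \<le> int B * int (word_length G S x)" if "x \<in> carrier G" for x
  proof (rule subadditive_le_word_length[OF S(2,3) that])
    show "frag_norm1 I (transfer \<one>) \<le> 0" by (simp add: transfer_one frag_norm1_def)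
    show "frag_norm1 I (transfer (x \<otimes> y)) \<le> frag_norm1 I (transfer x) + frag_norm1 I (transfer y)"
      if "x \<in> carrier G" "y \<in> carrier G" for x y
    proof -
      have "\<bar>sgn x\<bar> = 1" using sgn_cases[OF that(1)] by auto
      then show ?thesis
        using frag_norm1_add_le[of I "transfer x" "frag_cmul (sgn x) (transfer y)"]
        by (simp add: transfer_mult that frag_norm1_cmul)
    qed
    show "frag_norm1 I (transfer s) \<le> int B" if "s \<in> S \<union> (\<lambda>s. inv s) ` S" for s
    proof -
      have "frag_norm1 I (transfer s) \<le> (\<Sum>s\<in>S \<union> (\<lambda>s. inv s) ` S. frag_norm1 I (transfer s))"
        using S(1) that by (intro member_le_sum) (simp_all add: frag_norm1_nonneg)
      then show ?thesis by (simp add: B_def)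
    qed
  qed
  then show ?thesis by (rule that)
qed

lemma aut_growth_le_linear: "growth_le (aut_growth G S) (\<lambda>n. n)"
proof -
  obtain B where B: "\<And>x. x \<in> carrier G \<Longrightarrow> frag_norm1 I (transfer x) \<le> int B * int (word_length G S x)"
    using transfer_norm1_le_word_length by blast
  define key where "key x = (A #> x, nat (frag_content I (transfer x)), primitive_residue x)" for x
  define K where "K n = (rcosets A) \<times> {0..B * n} \<times> (I \<rightarrow>\<^sub>E {0..<index})" for n
  have growth_le_card: "aut_growth G S n \<le> card (K n)" for n
  proof (rule aut_growth_le_card)
    show "finite (K n)" using finite_index finite_I by (simp add: K_def finite_PiE)
    show "key x \<in> K n" if x: "x \<in> carrier G" "word_length G S x \<le> n" for x
    proof -
      have "frag_content I (transfer x) \<le> int B * int (word_length G S x)"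
        using frag_content_le_norm1[OF finite_I, of "transfer x"] B[OF x(1)] by linarith
      moreover have "int B * int (word_length G S x) \<le> int B * int n"
        using x(2) by (simp add: mult_left_mono)
      ultimately have "nat (frag_content I (transfer x)) \<le> B * n" by (simp add: nat_le_iff)
      then show ?thesis
        using x(1) index_pos by (simp add: key_def K_def primitive_residue_def rcosetsI subset)
    qed
    show "aut_orbit G x = aut_orbit G y" if "x \<in> carrier G" "y \<in> carrier G" "key x = key y" for x y
    proof (rule aut_orbit_eq_if_transfer_congruent[OF that(1,2)])
      show "A #> x = A #> y" using that(3) by (simp add: key_def)
      show "frag_content I (transfer x) = frag_content I (transfer y)"
        using that(3) frag_content_nonneg[of I "transfer x"] frag_content_nonneg[of I "transfer y"]
        by (simp add: key_def eq_nat_nat_iff)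
      show "primitive_residue x = primitive_residue y" using that(3) by (simp add: key_def)
    qed
  qed
  define R where "R = card (rcosets A) * nat index ^ card I"
  have "card (K n) = R * B * n + R" for n
    using finite_I by (simp add: K_def R_def card_cartesian_product card_PiE algebra_simps)
  then have "aut_growth G S n \<le> R * B * n + R" for n
    using growth_le_card[of n] by simp
  then show ?thesis by (rule growth_le_linearI)
qed

end

lemma odd_root_dvd:
  assumes i: "i \<in> I" and y: "y \<in> carrier G" and odd: "odd k'"
    and coprime: "coprime (int k') index"
    and root: "y [^] k' = f_inv (frag_of i) [^] k"
  shows "k' dvd k"
proof -
  define a where "a = f_inv (frag_of i)"
  have a: "a \<in> A" "f a = frag_of i" using i by (simp_all add: a_def f_inv_closed f_f_inv)
  have ak: "a [^] k \<in> A" using a(1) by (rule nat_pow_closed_subgroup)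
  have "sgn y ^ k' = 1"
    using root sgn_subgroup[OF ak] by (simp add: a_def sgn_pow[OF y, symmetric])
  then have "sgn y = 1" using sgn_cases[OF y] odd by auto
  then have "frag_cmul (int k') (transfer y) = transfer (y [^] k')"
    using transfer_nat_pow[OF y] by simp
  also have "\<dots> = transfer (a [^] k)" using root by (simp add: a_def)
  also have "\<dots> = frag_cmul index (frag_cmul (int k) (frag_of i))"
    using transfer_subgroup[OF ak] f_pow[OF a(1)] a(2) by simp
  finally have "frag_cmul (int k') (transfer y) = frag_cmul index (frag_cmul (int k) (frag_of i))" .
  from arg_cong[OF this, of "\<lambda>v. Poly_Mapping.lookup v i"]
  have "int k' * Poly_Mapping.lookup (transfer y) i = index * int k" by simp
  then have "int k' dvd index * int k" by (metis dvd_triv_left)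
  then show ?thesis using coprime by (simp add: coprime_dvd_mult_right_iff)
qed

lemma aut_orbit_pow_neq:
  assumes i: "i \<in> I" and k: "0 < k" "k < k'" and odd: "odd k'" and coprime: "coprime (int k') index"
  shows "aut_orbit G (f_inv (frag_of i) [^] k) \<noteq> aut_orbit G (f_inv (frag_of i) [^] k')"
proof
  define a where "a = f_inv (frag_of i)"
  have ac: "a \<in> carrier G" using i f_inv_closed subset by (auto simp: a_def)
  assume "aut_orbit G (f_inv (frag_of i) [^] k) = aut_orbit G (f_inv (frag_of i) [^] k')"
  then have "a [^] k \<in> aut_orbit G (a [^] k')" using aut_orbit_self[of "a [^] k" G] by (simp add: a_def)
  then obtain \<phi> where \<phi>: "\<phi> \<in> iso G G" "a [^] k = \<phi> (a [^] k')"
    unfolding aut_orbit_def by blast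
  have "\<phi> (a [^] k') = \<phi> a [^] k'"
    using iso_imp_homomorphism[OF \<phi>(1)] ac is_group is_group by (rule hom_nat_pow)
  moreover have "\<phi> a \<in> carrier G" using iso_imp_homomorphism[OF \<phi>(1)] ac by (rule hom_in_carrier)
  ultimately have "k' dvd k"
    using odd_root_dvd[OF i _ odd coprime] \<phi>(2) by (simp add: a_def)
  then show False using k by (simp add: nat_dvd_not_less)
qed

lemma inj_aut_orbit_pow:
  assumes i: "i \<in> I"
  shows "inj (\<lambda>j. aut_orbit G (f_inv (frag_of i) [^] (1 + 2 * nat index * j)))"
proof (rule injI, rule ccontr)
  have coprime: "coprime (int (1 + 2 * nat index * j)) index" for j
  proof -
    have "int (1 + 2 * nat index * j) = (2 * int j) * index + 1" using index_pos by simp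
    then have "gcd index (int (1 + 2 * nat index * j)) = gcd index 1" by (simp only: gcd_add_mult)
    then show ?thesis by (simp add: coprime_iff_gcd_eq_1 gcd.commute)
  qed
  have neq: "aut_orbit G (f_inv (frag_of i) [^] (1 + 2 * nat index * j))
           \<noteq> aut_orbit G (f_inv (frag_of i) [^] (1 + 2 * nat index * j'))" if "j < j'" for j j'
    using i that index_pos coprime by (intro aut_orbit_pow_neq) simp_all
  fix j j'
  assume "aut_orbit G (f_inv (frag_of i) [^] (1 + 2 * nat index * j))
        = aut_orbit G (f_inv (frag_of i) [^] (1 + 2 * nat index * j'))" and "j \<noteq> j'"
  then show False using neq[of j j'] neq[of j' j] by (cases "j < j'") auto
qed

context
  fixes S :: "'a set"
  assumes S: "finite S" "S \<subseteq> carrier G" "generate G S = carrier G"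
begin

lemma aut_growth_ge_linear: "growth_le (\<lambda>n. n) (aut_growth G S)"
proof -
  obtain i where i: "i \<in> I" using I_nonempty by blast
  define a where "a = f_inv (frag_of i)"
  have ac: "a \<in> carrier G" using i f_inv_closed subset by (auto simp: a_def)
  define l where "l = word_length G S a"
  define e where "e j = 1 + 2 * nat index * j" for j
  define c where "c = 2 * nat index * l + l + 1"
  have "n \<le> aut_growth G S (c * n + c)" for n
  proof -
    have "inj_on (\<lambda>j. aut_orbit G (a [^] e j)) {0..n}"
      using inj_aut_orbit_pow[OF i] unfolding a_def e_def by (rule inj_on_subset) simp
    moreover have "a [^] e j \<in> carrier G \<and> word_length G S (a [^] e j) \<le> c * n + c" if "j \<in> {0..n}" for j
    proof -
      have "word_length G S (a [^] e j) \<le> e j * l"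
        unfolding l_def using word_length_pow_le[OF S(2,3) ac] .
      moreover have "e j * l \<le> e n * l"
        using that by (intro mult_le_mono1) (simp add: e_def)
      moreover have "e n * l \<le> c * n + c" by (simp add: e_def c_def algebra_simps)
      ultimately have "word_length G S (a [^] e j) \<le> c * n + c" by linarith
      then show ?thesis using ac by simp
    qed
    ultimately have "card {0..n} \<le> aut_growth G S (c * n + c)"
      by (rule card_le_aut_growth[OF S])
    then show ?thesis by simp
  qed
  then show ?thesis by (rule growth_le_id_linearI[rotated]) (simp add: c_def)
qed

end

end

theorem mainTheorem11:
  fixes G :: "('a, 'b) monoid_scheme" and A :: "'a set" and m :: nat
    and sgn :: "'a \<Rightarrow> int" and S :: "'a set"
  assumes "group G"
    and "A \<lhd> G"
    and "finite (rcosets\<^bsub>G\<^esub> A)"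
    and "m \<ge> 1"
    and "G\<lparr>carrier := A\<rparr> \<cong> free_Abelian_group {..<m}"
    and "sgn \<in> hom G sign_group"
    and "\<forall>g\<in>carrier G. \<forall>x\<in>A. inv\<^bsub>G\<^esub> g \<otimes>\<^bsub>G\<^esub> x \<otimes>\<^bsub>G\<^esub> g = x [^]\<^bsub>G\<^esub> sgn g"
    and "finite S" and "S \<subseteq> carrier G" and "generate G S = carrier G"
  shows "growth_equiv (aut_growth G S) (\<lambda>n. n)"
proof -
  obtain f where "f \<in> iso (G\<lparr>carrier := A\<rparr>) (free_Abelian_group {..<m})"
    using assms(5) unfolding is_iso_def by blast
  moreover have "0 \<in> {..<m}" using assms(4) by simp
  ultimately interpret signed_lattice_extension A G "{..<m}" sgn f
    using assms(2,3,6,7)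
    by (auto simp: signed_lattice_extension_def signed_lattice_extension_axioms_def)
  show ?thesis
    unfolding growth_equiv_def
    using aut_growth_le_linear[OF assms(8-10)] aut_growth_ge_linear[OF assms(8-10)] by blast
qed

end
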